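(* The Robertson graph is not a $(4,5,3)$-equitable cage; that is, the Robertson graph (which is a $4$-regular graph of girth $5$ and chromatic number $3$ on $19$ vertices) admits no proper $3$-coloring whose color classes have sizes differing pairwise by at most one (equivalently, no proper $3$-coloring with color class sizes $6,6,7$).
   Context: All graphs are finite and simple. The Robertson graph is the unique $(4,5)$-cage, i.e. the unique $4$-regular graph of girth $5$ with the minimum possible number of vertices, namely $19$. A proper vertex coloring is equitable if the sizes of any two color classes differ by at most one. An $(r,g,\chi)$-graph is an $r$-regular graph with girth exactly $g$ and chromatic number exactly $\chi$; an $(r,g,\chi)$-equitable graph is one admitting an equitable proper $\chi$-coloring, and an $(r,g,\chi)$-equitable cage is an $(r,g,\chi)$-equitable graph of minimum order. *)

theory Defs
  imports Main
begin

definition proper_coloring :: "'a set \<Rightarrow> ('a \<Rightarrow> 'a \<Rightarrow> bool) \<Rightarrow> nat \<Rightarrow> ('a \<Rightarrow> nat) \<Rightarrow> bool" where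
  "proper_coloring V E k c \<longleftrightarrow>
     (\<forall>v\<in>V. c v < k) \<and> (\<forall>u\<in>V. \<forall>v\<in>V. E u v \<longrightarrow> c u \<noteq> c v)"

definition equitable_coloring :: "'a set \<Rightarrow> ('a \<Rightarrow> 'a \<Rightarrow> bool) \<Rightarrow> nat \<Rightarrow> ('a \<Rightarrow> nat) \<Rightarrow> bool" where
  "equitable_coloring V E k c \<longleftrightarrow>
     proper_coloring V E k c \<and>
     (\<forall>i<k. \<forall>j<k. card {v\<in>V. c v = i} \<le> card {v\<in>V. c v = j} + 1)"

text \<open>The Robertson graph (the unique (4,5)-cage) on vertices 0..18:
  the Hamiltonian cycle 0-1-...-18-0 plus 19 chords.\<close>

definition robertson_V :: "nat set" where
  "robertson_V = {0..<19}"

definition robertson_edge_list :: "(nat \<times> nat) list" where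
  "robertson_edge_list =
     [(i, Suc i mod 19). i \<leftarrow> [0..<19]] @
     [(0,4),(0,7),(1,9),(1,12),(2,6),(2,14),(3,8),(3,11),(4,15),(5,13),
      (5,17),(6,10),(7,16),(8,13),(9,17),(10,15),(11,18),(12,16),(14,18)]"

definition robertson_adj :: "nat \<Rightarrow> nat \<Rightarrow> bool" where
  "robertson_adj u v \<longleftrightarrow>
     (u, v) \<in> set robertson_edge_list \<or> (v, u) \<in> set robertson_edge_list"

end

theory Submission
  imports Defs
begin

text \<open>Colour the vertices in the order 0, 1, ..., 18. A proper colouring is then exactly a
  sequence in which every vertex avoids the colours of its earlier neighbours, so all proper
  3-colourings can be enumerated by backtracking, and the enumeration finds none whose colour
  classes are balanced.\<close>

definition earlier_neighbours :: "(nat \<Rightarrow> nat \<Rightarrow> bool) \<Rightarrow> nat \<Rightarrow> nat list list" where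
  "earlier_neighbours E n = map (\<lambda>v. filter (\<lambda>u. E u v) [0..<v]) [0..<n]"

definition balanced :: "nat \<Rightarrow> nat list \<Rightarrow> bool" where
  "balanced k cs \<longleftrightarrow> (\<forall>i<k. \<forall>j<k. count_list cs i \<le> count_list cs j + 1)"

text \<open>\<open>cs ! u\<close> is the colour of vertex \<open>u\<close>, for the already coloured vertices
  \<open>u < length cs\<close>; \<open>r\<close> further vertices remain. The bounded quantifier ranges over
  \<open>set [0..<k]\<close> rather than \<open>x < k\<close> because \<open>code_simp\<close> evaluates the former far faster.\<close>

fun extends_to_coloring ::
  "nat list list \<Rightarrow> nat \<Rightarrow> (nat list \<Rightarrow> bool) \<Rightarrow> nat \<Rightarrow> nat list \<Rightarrow> bool" where
  "extends_to_coloring N k P 0 cs \<longleftrightarrow> P cs"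
| "extends_to_coloring N k P (Suc r) cs \<longleftrightarrow>
     (\<exists>x\<in>set [0..<k]. (\<forall>u\<in>set (N ! length cs). cs ! u \<noteq> x) \<and>
        extends_to_coloring N k P r (cs @ [x]))"

lemma count_list_map_upt: "count_list (map c [0..<n]) i = card {v\<in>{0..<n}. c v = i}"
proof (induction n)
  case (Suc n)
  have "{v\<in>{0..<Suc n}. c v = i} =
      (if c n = i then insert n {v\<in>{0..<n}. c v = i} else {v\<in>{0..<n}. c v = i})"
    by (auto simp: less_Suc_eq)
  then show ?case using Suc by simp
qed simp

lemma equitable_coloring_upt_iff:
  "equitable_coloring {0..<n} E k c \<longleftrightarrow>
     proper_coloring {0..<n} E k c \<and> balanced k (map c [0..<n])"
  by (simp add: equitable_coloring_def balanced_def count_list_map_upt)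

lemma proper_coloring_extends_to_coloring:
  assumes "proper_coloring {0..<n} E k c" and "P (map c [0..<n])" and "j \<le> n"
  shows "extends_to_coloring (earlier_neighbours E n) k P (n - j) (map c [0..<j])"
  using \<open>j \<le> n\<close>
proof (induction j rule: inc_induct)
  case base
  then show ?case using assms(2) by simp
next
  case (step j)
  have "n - j = Suc (n - Suc j)" using step.hyps by simp
  moreover have "c j \<in> set [0..<k]"
    using assms(1) step.hyps by (simp add: proper_coloring_def)
  moreover have "map c [0..<j] ! u \<noteq> c j"
    if "u \<in> set (earlier_neighbours E n ! j)" for u
    using that assms(1) step.hyps by (auto simp: earlier_neighbours_def proper_coloring_def)
  ultimately show ?case using step.IH by (auto intro!: bexI[where x = "c j"])
qed

theorem theorem6p1:
  shows "\<not> (\<exists>c. equitable_coloring robertson_V robertson_adj 3 c)"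
proof
  assume "\<exists>c. equitable_coloring robertson_V robertson_adj 3 c"
  then obtain c where "proper_coloring {0..<19} robertson_adj 3 c"
    and "balanced 3 (map c [0..<19])"
    by (auto simp: robertson_V_def equitable_coloring_upt_iff)
  then have "extends_to_coloring (earlier_neighbours robertson_adj 19) 3 (balanced 3) 19 []"
    using proper_coloring_extends_to_coloring[where j = 0] by fastforce
  moreover have "\<not> extends_to_coloring (earlier_neighbours robertson_adj 19) 3 (balanced 3) 19 []"
    by code_simp
  ultimately show False by contradiction
qed

end
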